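(* Let $w\in\mathcal W$ and $\rho_c>0$. Let $\gamma_c^\star>0$ be a solution of \[\Psi\big(\widehat\theta_c-\gamma^{-1}\lambda(w,\widehat x_c)\big)+\gamma^{-1}\big\langle\nabla\Psi\big(\widehat\theta_c-\gamma^{-1}\lambda(w,\widehat x_c)\big),\lambda(w,\widehat x_c)\big\rangle=\Psi(\widehat\theta_c)-\rho_c,\] and $\theta_c^\star=\widehat\theta_c-\lambda(w,\widehat x_c)/\gamma_c^\star$. Then the supremum $\sup_{\mathbb Q\in\mathbb B_{Y|\widehat x_c}}\mathbb E_{\mathbb Q}[\ell_\lambda(\widehat x_c,Y,w)]$ is attained by the distribution $\mathbb Q^\star_{Y|\widehat x_c}$ with density $f(\cdot|\theta_c^\star)$.
   Context: Exponential family: $\nu$ a measure on $\mathcal Y\subseteq\mathbb R^m$, $h\ge0$, $T:\mathcal Y\to\mathbb R^p$; $f(y|\theta)=h(y)\exp(\langle\theta,T(y)\rangle-\Psi(\theta))$ density w.r.t. $\nu$; $\Theta=\{\theta\in\mathbb R^p:\int he^{\langle\theta,T\rangle}d\nu<\infty\}$, $\Psi(\theta)=\log\int he^{\langle\theta,T\rangle}d\nu$; regular family ($\Theta$ open, $T_i$ affinely independent). $\mathcal X\subseteq\mathbb R^n$, $\widehat x_c\in\mathcal X$, $\mathcal W$ finite-dimensional, $\lambda:\mathcal W\times\mathcal X\to\Theta$ jointly continuous; $\ell_\lambda(x,y,w)=\Psi(\lambda(w,x))-\langle T(y),\lambda(w,x)\rangle$. $\widehat\theta_c\in\Theta$. KL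 divergence $\mathrm{KL}(\mathbb P_1\|\mathbb P_2)=\mathbb E_{\mathbb P_1}[\log d\mathbb P_1/d\mathbb P_2]$. $\mathbb B_{Y|\widehat x_c}$ is the set of distributions on $\mathcal Y$ with density $f(\cdot|\theta)$ for some $\theta\in\Theta$ satisfying $\mathrm{KL}(f(\cdot|\theta)\|f(\cdot|\widehat\theta_c))\le\rho_c$. *)

theory Defs
  imports "HOL-Probability.Probability"
begin

definition expfam_Theta ::
  "'y measure \<Rightarrow> ('y \<Rightarrow> real) \<Rightarrow> ('y \<Rightarrow> 'p::euclidean_space) \<Rightarrow> 'p set" where
  "expfam_Theta nu h T =
     {\<theta>. (\<integral>\<^sup>+ y. ennreal (h y * exp (inner \<theta> (T y))) \<partial>nu) < \<infinity>}"

definition expfam_Psi ::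
  "'y measure \<Rightarrow> ('y \<Rightarrow> real) \<Rightarrow> ('y \<Rightarrow> 'p::euclidean_space) \<Rightarrow> 'p \<Rightarrow> real" where
  "expfam_Psi nu h T \<theta> = ln (\<integral> y. h y * exp (inner \<theta> (T y)) \<partial>nu)"

definition expfam_density ::
  "'y measure \<Rightarrow> ('y \<Rightarrow> real) \<Rightarrow> ('y \<Rightarrow> 'p::euclidean_space) \<Rightarrow> 'p \<Rightarrow> 'y \<Rightarrow> real" where
  "expfam_density nu h T \<theta> y = h y * exp (inner \<theta> (T y) - expfam_Psi nu h T \<theta>)"

definition expfam_dist ::
  "'y measure \<Rightarrow> ('y \<Rightarrow> real) \<Rightarrow> ('y \<Rightarrow> 'p::euclidean_space) \<Rightarrow> 'p \<Rightarrow> 'y measure" where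
  "expfam_dist nu h T \<theta> = density nu (\<lambda>y. ennreal (expfam_density nu h T \<theta> y))"

text \<open>KL(P1 || P2) = E_P1[log dP1/dP2] (natural logarithm); note the library's
  argument order: KL_divergence b M N is the divergence of N from M.\<close>
definition KL :: "'y measure \<Rightarrow> 'y measure \<Rightarrow> real" where
  "KL P1 P2 = KL_divergence (exp 1) P2 P1"

text \<open>Regular family: Theta open and the components of T affinely independent
  (no non-trivial affine relation a . T(y) = c holds nu-almost everywhere).\<close>
definition regular_expfam ::
  "'y measure \<Rightarrow> ('y \<Rightarrow> real) \<Rightarrow> ('y \<Rightarrow> 'p::euclidean_space) \<Rightarrow> bool" where
  "regular_expfam nu h T \<longleftrightarrow>
     open (expfam_Theta nu h T) \<and>
     (\<forall>a c. (AE y in nu. inner a (T y) = c) \<longrightarrow> a = 0)"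

definition loss_lambda ::
  "'y measure \<Rightarrow> ('y \<Rightarrow> real) \<Rightarrow> ('y \<Rightarrow> 'p::euclidean_space) \<Rightarrow> ('w \<Rightarrow> 'x \<Rightarrow> 'p)
     \<Rightarrow> 'x \<Rightarrow> 'y \<Rightarrow> 'w \<Rightarrow> real" where
  "loss_lambda nu h T lam x y w =
     expfam_Psi nu h T (lam w x) - inner (T y) (lam w x)"

definition KL_ball ::
  "'y measure \<Rightarrow> ('y \<Rightarrow> real) \<Rightarrow> ('y \<Rightarrow> 'p::euclidean_space) \<Rightarrow> 'p \<Rightarrow> real \<Rightarrow> 'y measure set" where
  "KL_ball nu h T \<theta>hat \<rho> =
     {expfam_dist nu h T \<theta> | \<theta>. \<theta> \<in> expfam_Theta nu h T \<and>
        KL (expfam_dist nu h T \<theta>) (expfam_dist nu h T \<theta>hat) \<le> \<rho>}"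

end

theory Submission
  imports Defs
begin

text \<open>In natural parameters, \<open>KL(P\<^sub>\<theta> \<parallel> P\<^sub>\<theta>\<^sub>') = (\<theta> - \<theta>') \<bullet> E\<^sub>\<theta>[T] - \<Psi> \<theta> + \<Psi> \<theta>'\<close>,
  the gradient of \<open>\<Psi>\<close> is the mean \<open>E\<^sub>\<theta>[T]\<close>, and the expected loss under \<open>P\<^sub>\<theta>\<close> is
  \<open>\<Psi> \<lambda> - \<lambda> \<bullet> E\<^sub>\<theta>[T]\<close>. The equation defining \<open>\<gamma>\<close> therefore says exactly that
  \<open>P\<^sub>\<theta>\<^sub>\<star>\<close> lies on the boundary of the KL ball, and the three-point identity for KL shows
  that every \<open>P\<^sub>\<theta>\<close> inside the ball has \<open>\<lambda> \<bullet> E\<^sub>\<theta>[T] \<ge> \<lambda> \<bullet> E\<^sub>\<theta>\<^sub>\<star>[T]\<close>, i.e. no larger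
  expected loss. If the partition function vanishes at \<open>\<theta>hat\<close>, every \<open>P\<^sub>\<theta>\<close> is the null
  measure and the claim is trivial.\<close>

lemma abs_le_exp_plus_exp_neg:
  fixes s x :: real
  assumes "s > 0"
  shows "\<bar>x\<bar> \<le> (exp (s * x) + exp (- (s * x))) / s"
proof -
  have "s * \<bar>x\<bar> \<le> exp (s * \<bar>x\<bar>)"
    using exp_ge_add_one_self[of "s * \<bar>x\<bar>"] by linarith
  also have "\<dots> \<le> exp (s * x) + exp (- (s * x))"
    using assms by (cases "x \<ge> 0") auto
  finally show ?thesis
    using assms by (simp add: field_simps abs_mult)
qed

lemma open_contains_segment:
  fixes S :: "'a::real_normed_vector set"
  assumes "open S" "x \<in> S"
  obtains \<delta> where "\<delta> > 0" "\<And>t. \<bar>t\<bar> < \<delta> \<Longrightarrow> x + t *\<^sub>R d \<in> S"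
proof -
  have "open ((\<lambda>t::real. x + t *\<^sub>R d) -` S)"
    by (rule continuous_open_vimage[OF \<open>open S\<close>]) (auto intro!: continuous_intros)
  moreover have "0 \<in> (\<lambda>t::real. x + t *\<^sub>R d) -` S"
    using \<open>x \<in> S\<close> by simp
  ultimately obtain \<delta> where "\<delta> > 0" "\<forall>t. dist t 0 < \<delta> \<longrightarrow> x + t *\<^sub>R d \<in> S"
    unfolding open_dist by blast
  then show ?thesis
    using that by (auto simp: dist_real_def)
qed

locale exponential_family =
  fixes nu :: "'y measure" and h :: "'y \<Rightarrow> real" and T :: "'y \<Rightarrow> 'p::euclidean_space"
  assumes h_measurable[measurable]: "h \<in> borel_measurable nu"
    and T_measurable[measurable]: "T \<in> borel_measurable nu"
    and h_nonneg: "\<And>y. y \<in> space nu \<Longrightarrow> 0 \<le> h y"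
    and open_Theta: "open (expfam_Theta nu h T)"
begin

abbreviation "\<Theta> \<equiv> expfam_Theta nu h T"
abbreviation "\<Psi> \<equiv> expfam_Psi nu h T"
abbreviation "f \<equiv> expfam_density nu h T"
abbreviation "P \<equiv> expfam_dist nu h T"

definition partition :: "'p \<Rightarrow> real" where
  "partition \<theta> = (\<integral>y. h y * exp (inner \<theta> (T y)) \<partial>nu)"

definition mean_stat :: "'p \<Rightarrow> 'p" where
  "mean_stat \<theta> = (\<integral>y. f \<theta> y *\<^sub>R T y \<partial>nu)"

lemma density_measurable[measurable]: "f \<theta> \<in> borel_measurable nu"
  unfolding expfam_density_def by measurable

lemma density_nonneg: "y \<in> space nu \<Longrightarrow> 0 \<le> f \<theta> y"
  unfolding expfam_density_def using h_nonneg by simp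

lemma partition_nonneg: "0 \<le> partition \<theta>"
  unfolding partition_def by (rule integral_nonneg_AE) (auto simp: h_nonneg)

lemma integrable_partition:
  assumes "\<theta> \<in> \<Theta>"
  shows "integrable nu (\<lambda>y. h y * exp (inner \<theta> (T y)))"
  by (rule integrableI_nonneg) (use assms h_nonneg in \<open>auto simp: expfam_Theta_def\<close>)

text \<open>Openness of \<open>\<Theta>\<close> is what makes the statistic integrable: \<open>|d \<bullet> T|\<close> is dominated
  by the exponential weights at the parameters \<open>\<theta> \<plusminus> s d\<close>.\<close>

lemma integrable_partition_stat:
  assumes "\<theta> \<in> \<Theta>"
  shows "integrable nu (\<lambda>y. h y * exp (inner \<theta> (T y)) * inner d (T y))"
proof -
  obtain \<delta> where \<delta>: "\<delta> > 0" "\<And>t. \<bar>t\<bar> < \<delta> \<Longrightarrow> \<theta> + t *\<^sub>R d \<in> \<Theta>"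
    using open_contains_segment[OF open_Theta assms] by blast
  define s where "s = \<delta> / 2"
  have s: "s > 0" "\<theta> + s *\<^sub>R d \<in> \<Theta>" "\<theta> - s *\<^sub>R d \<in> \<Theta>"
    using \<delta>(1) \<delta>(2)[of s] \<delta>(2)[of "- s"] by (auto simp: s_def)
  let ?bound = "\<lambda>y. (h y * exp (inner (\<theta> + s *\<^sub>R d) (T y))
                    + h y * exp (inner (\<theta> - s *\<^sub>R d) (T y))) / s"
  show ?thesis
  proof (rule Bochner_Integration.integrable_bound)
    show "integrable nu ?bound"
      using integrable_partition[OF s(2)] integrable_partition[OF s(3)] by auto
    show "AE y in nu. norm (h y * exp (inner \<theta> (T y)) * inner d (T y)) \<le> norm (?bound y)"
    proof (rule AE_I2)
      fix y assume "y \<in> space nu"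
      then have hy: "0 \<le> h y" by (rule h_nonneg)
      have "norm (h y * exp (inner \<theta> (T y)) * inner d (T y))
          = h y * exp (inner \<theta> (T y)) * \<bar>inner d (T y)\<bar>"
        using hy by (simp add: abs_mult)
      also have "\<dots> \<le> h y * exp (inner \<theta> (T y))
                      * ((exp (s * inner d (T y)) + exp (- (s * inner d (T y)))) / s)"
        using hy abs_le_exp_plus_exp_neg[OF s(1)] by (intro mult_left_mono) auto
      also have "\<dots> = ?bound y"
        by (simp add: inner_add_left inner_diff_left exp_add exp_diff exp_minus field_simps)
      also have "\<dots> = norm (?bound y)"
        using hy s by simp
      finally show "norm (h y * exp (inner \<theta> (T y)) * inner d (T y)) \<le> norm (?bound y)" .
    qed
  qed measurable
qed

text \<open>The null set of \<open>h y * exp (\<theta> \<bullet> T y)\<close> does not depend on \<open>\<theta>\<close>.\<close>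

lemma partition_pos_if_partition_pos:
  assumes "\<theta>' \<in> \<Theta>" "partition \<theta>' > 0" "\<theta> \<in> \<Theta>"
  shows "partition \<theta> > 0"
proof (rule ccontr)
  assume "\<not> partition \<theta> > 0"
  then have "partition \<theta> = 0"
    using partition_nonneg[of \<theta>] by linarith
  then have "AE y in nu. h y * exp (inner \<theta> (T y)) = 0"
    using integral_nonneg_eq_0_iff_AE[OF integrable_partition[OF assms(3)]] h_nonneg
    by (auto simp: partition_def)
  then have "AE y in nu. h y * exp (inner \<theta>' (T y)) = 0"
    by eventually_elim simp
  then have "partition \<theta>' = 0"
    unfolding partition_def by (rule integral_eq_zero_AE)
  with assms(2) show False by simp
qed

lemma integral_dist_eq_0_if_partition_eq_0:
  assumes "\<theta>' \<in> \<Theta>" "partition \<theta>' = 0"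
  shows "integral\<^sup>L (P \<theta>) g = 0"
proof -
  have "AE y in nu. h y * exp (inner \<theta>' (T y)) = 0"
    using integral_nonneg_eq_0_iff_AE[OF integrable_partition[OF assms(1)]] h_nonneg assms(2)
    by (auto simp: partition_def)
  then have "AE y in nu. f \<theta> y = 0"
    by eventually_elim (simp add: expfam_density_def)
  then have "AE y in P \<theta>. g y = 0"
    unfolding expfam_dist_def by (subst AE_density) (auto elim: AE_mp)
  then show ?thesis
    by (rule integral_eq_zero_AE)
qed

lemma integral_dist:
  assumes "g \<in> borel_measurable nu"
  shows "integral\<^sup>L (P \<theta>) g = (\<integral>y. f \<theta> y * g y \<partial>nu)"
  unfolding expfam_dist_def using assms by (subst integral_density) (auto simp: density_nonneg)

lemma sets_dist[measurable_cong]: "sets (P \<theta>) = sets nu"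
  by (simp add: expfam_dist_def)

lemma dist_eq_density_dist:
  "P \<theta> = density (P \<theta>') (\<lambda>y. ennreal (exp (inner (\<theta> - \<theta>') (T y) - \<Psi> \<theta> + \<Psi> \<theta>')))"
proof -
  have "f \<theta>' y * exp (inner (\<theta> - \<theta>') (T y) - \<Psi> \<theta> + \<Psi> \<theta>') = f \<theta> y" for y
    by (simp add: expfam_density_def mult.assoc exp_add[symmetric] inner_diff_left)
  then show ?thesis
    unfolding expfam_dist_def
    by (subst density_density_eq) (auto intro!: density_cong simp: density_nonneg ennreal_mult[symmetric])
qed

end

locale nondegenerate_exponential_family = exponential_family +
  assumes partition_pos: "\<theta> \<in> \<Theta> \<Longrightarrow> partition \<theta> > 0"
begin

lemma density_eq:
  assumes "\<theta> \<in> \<Theta>"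
  shows "f \<theta> y = h y * exp (inner \<theta> (T y)) / partition \<theta>"
  using partition_pos[OF assms]
  by (simp add: expfam_density_def expfam_Psi_def partition_def exp_diff)

lemma integrable_density:
  assumes "\<theta> \<in> \<Theta>"
  shows "integrable nu (f \<theta>)"
  unfolding density_eq[OF assms] using integrable_partition[OF assms] by simp

lemma integral_density_eq_1:
  assumes "\<theta> \<in> \<Theta>"
  shows "(\<integral>y. f \<theta> y \<partial>nu) = 1"
  unfolding density_eq[OF assms] using partition_pos[OF assms] by (simp add: partition_def)

lemma integrable_density_stat:
  assumes "\<theta> \<in> \<Theta>"
  shows "integrable nu (\<lambda>y. f \<theta> y * inner d (T y))"
  unfolding density_eq[OF assms] using integrable_partition_stat[OF assms, of d] by simp

lemma integrable_density_scaleR_stat: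
  assumes "\<theta> \<in> \<Theta>"
  shows "integrable nu (\<lambda>y. f \<theta> y *\<^sub>R T y)"
proof -
  have "(\<lambda>y. f \<theta> y *\<^sub>R T y) = (\<lambda>y. \<Sum>b\<in>Basis. (f \<theta> y * inner b (T y)) *\<^sub>R b)"
    by (subst (2) euclidean_representation_sum_fun[symmetric]) (simp add: inner_commute)
  then show ?thesis
    using integrable_density_stat[OF assms] by (simp add: integrable_sum)
qed

lemma inner_mean_stat:
  assumes "\<theta> \<in> \<Theta>"
  shows "inner d (mean_stat \<theta>) = (\<integral>y. f \<theta> y * inner d (T y) \<partial>nu)"
  unfolding mean_stat_def
  by (subst integral_inner_right[symmetric]) (auto simp: integrable_density_scaleR_stat[OF assms])

lemma prob_space_dist:
  assumes "\<theta> \<in> \<Theta>"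
  shows "prob_space (P \<theta>)"
proof (rule prob_spaceI)
  have "emeasure (P \<theta>) (space (P \<theta>)) = (\<integral>\<^sup>+y. ennreal (f \<theta> y) \<partial>nu)"
    unfolding expfam_dist_def by (simp add: emeasure_density)
  also have "\<dots> = ennreal (\<integral>y. f \<theta> y \<partial>nu)"
    by (rule nn_integral_eq_integral) (auto simp: integrable_density[OF assms] density_nonneg)
  finally show "emeasure (P \<theta>) (space (P \<theta>)) = 1"
    by (simp add: integral_density_eq_1[OF assms])
qed

lemma integral_dist_affine_stat:
  assumes "\<theta> \<in> \<Theta>"
  shows "(\<integral>y. c - inner (T y) d \<partial>P \<theta>) = c - inner d (mean_stat \<theta>)"
proof -
  have "(\<integral>y. c - inner (T y) d \<partial>P \<theta>) = (\<integral>y. c * f \<theta> y - f \<theta> y * inner d (T y) \<partial>nu)"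
    by (subst integral_dist) (auto simp: algebra_simps inner_commute)
  also have "\<dots> = c - inner d (mean_stat \<theta>)"
    using integrable_density[OF assms] integrable_density_stat[OF assms]
    by (simp add: integral_density_eq_1[OF assms] inner_mean_stat[OF assms])
  finally show ?thesis .
qed

lemma KL_dist:
  assumes "\<theta> \<in> \<Theta>" "\<theta>' \<in> \<Theta>"
  shows "KL (P \<theta>) (P \<theta>') = inner (\<theta> - \<theta>') (mean_stat \<theta>) - \<Psi> \<theta> + \<Psi> \<theta>'"
proof -
  interpret prob_space "P \<theta>'"
    by (rule prob_space_dist[OF assms(2)])
  define q where "q y = inner (\<theta> - \<theta>') (T y) - \<Psi> \<theta> + \<Psi> \<theta>'" for y
  have [measurable]: "q \<in> borel_measurable nu"
    unfolding q_def by measurable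
  have "KL (P \<theta>) (P \<theta>') = (\<integral>y. exp (q y) * log (exp 1) (exp (q y)) \<partial>P \<theta>')"
    unfolding KL_def dist_eq_density_dist[of \<theta> \<theta>'] q_def[symmetric]
    by (rule KL_density) auto
  also have "\<dots> = (\<integral>y. q y \<partial>density (P \<theta>') (\<lambda>y. ennreal (exp (q y))))"
    by (subst integral_density) (auto simp: log_def)
  also have "\<dots> = (\<integral>y. f \<theta> y * inner (\<theta> - \<theta>') (T y) + (\<Psi> \<theta>' - \<Psi> \<theta>) * f \<theta> y \<partial>nu)"
    unfolding q_def dist_eq_density_dist[of \<theta> \<theta>', symmetric]
    by (subst integral_dist) (auto simp: algebra_simps)
  also have "\<dots> = inner (\<theta> - \<theta>') (mean_stat \<theta>) - \<Psi> \<theta> + \<Psi> \<theta>'"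
    using integrable_density_stat[OF assms(1)] integrable_density[OF assms(1)]
    by (simp add: inner_mean_stat[OF assms(1)] integral_density_eq_1[OF assms(1)])
  finally show ?thesis .
qed

text \<open>This is \<open>KL(P\<^sub>\<theta> \<parallel> P\<^sub>\<theta>\<^sub>+\<^sub>d) \<ge> 0\<close>, obtained by integrating \<open>1 + x \<le> e\<^sup>x\<close> against \<open>f \<theta>\<close>
  at \<open>x = d \<bullet> T - d \<bullet> E\<^sub>\<theta>[T]\<close>.\<close>

lemma inner_mean_stat_le_Psi_diff:
  assumes "\<theta> \<in> \<Theta>" "\<theta> + d \<in> \<Theta>"
  shows "inner d (mean_stat \<theta>) \<le> \<Psi> (\<theta> + d) - \<Psi> \<theta>"
proof -
  define m where "m = inner d (mean_stat \<theta>)"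
  have tilt: "f \<theta> y * exp (inner d (T y) - m)
      = h y * exp (inner (\<theta> + d) (T y)) * (exp (- m) / partition \<theta>)" for y
    by (simp add: density_eq[OF assms(1)] inner_add_left exp_add exp_diff exp_minus field_simps)
  have int_tilt: "integrable nu (\<lambda>y. f \<theta> y * exp (inner d (T y) - m))"
    unfolding tilt using integrable_partition[OF assms(2)] by simp
  have "1 = (\<integral>y. f \<theta> y + f \<theta> y * inner d (T y) - m * f \<theta> y \<partial>nu)"
    using integrable_density[OF assms(1)] integrable_density_stat[OF assms(1)]
    by (simp add: integral_density_eq_1[OF assms(1)] m_def inner_mean_stat[OF assms(1)])
  also have "\<dots> \<le> (\<integral>y. f \<theta> y * exp (inner d (T y) - m) \<partial>nu)"
  proof (rule integral_mono[OF _ int_tilt])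
    show "integrable nu (\<lambda>y. f \<theta> y + f \<theta> y * inner d (T y) - m * f \<theta> y)"
      using integrable_density[OF assms(1)] integrable_density_stat[OF assms(1)] by simp
    fix y assume "y \<in> space nu"
    moreover have "1 + (inner d (T y) - m) \<le> exp (inner d (T y) - m)"
      by (rule exp_ge_add_one_self)
    ultimately show "f \<theta> y + f \<theta> y * inner d (T y) - m * f \<theta> y \<le> f \<theta> y * exp (inner d (T y) - m)"
      using density_nonneg[of y \<theta>] mult_left_mono by (fastforce simp: algebra_simps)
  qed
  also have "\<dots> = exp (- m) * partition (\<theta> + d) / partition \<theta>"
    unfolding tilt by (simp add: partition_def)
  finally have "exp m * partition \<theta> \<le> partition (\<theta> + d)"
    using partition_pos[OF assms(1)] by (simp add: exp_minus field_simps)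
  then have "exp (m + ln (partition \<theta>)) \<le> exp (ln (partition (\<theta> + d)))"
    using partition_pos[OF assms(1)] partition_pos[OF assms(2)] by (simp add: exp_add)
  then show ?thesis
    by (simp add: m_def expfam_Psi_def partition_def)
qed

lemma gradient_Psi_eq_mean_stat:
  assumes "\<theta> \<in> \<Theta>" "GDERIV \<Psi> \<theta> :> g"
  shows "g = mean_stat \<theta>"
proof -
  have "inner d g = inner d (mean_stat \<theta>)" for d
  proof -
    obtain \<delta> where \<delta>: "\<delta> > 0" "\<And>t. \<bar>t\<bar> < \<delta> \<Longrightarrow> \<theta> + t *\<^sub>R d \<in> \<Theta>"
      using open_contains_segment[OF open_Theta assms(1)] by blast
    define F where "F t = \<Psi> (\<theta> + t *\<^sub>R d) - t * inner d (mean_stat \<theta>)" for t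
    have "((\<lambda>t. \<theta> + t *\<^sub>R d) has_derivative (\<lambda>t. t *\<^sub>R d)) (at 0)"
      by (auto intro!: derivative_eq_intros)
    moreover have "(\<Psi> has_derivative (\<lambda>x. inner x g)) (at (\<theta> + 0 *\<^sub>R d))"
      using assms(2) by (simp add: gderiv_def)
    ultimately have "((\<lambda>t. \<Psi> (\<theta> + t *\<^sub>R d)) has_derivative (\<lambda>t. inner (t *\<^sub>R d) g)) (at 0)"
      by (rule has_derivative_compose)
    moreover have "(\<lambda>t. inner (t *\<^sub>R d) g) = (*) (inner d g)"
      by (auto simp: inner_scaleR_left)
    ultimately have "DERIV (\<lambda>t. \<Psi> (\<theta> + t *\<^sub>R d)) 0 :> inner d g"
      by (simp add: has_field_derivative_def)
    then have "DERIV F 0 :> inner d g - inner d (mean_stat \<theta>)"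
      unfolding F_def by (auto intro!: derivative_eq_intros)
    moreover have "\<forall>t. \<bar>0 - t\<bar> < \<delta> \<longrightarrow> F 0 \<le> F t"
      using inner_mean_stat_le_Psi_diff[OF assms(1) \<delta>(2)] by (fastforce simp: F_def inner_scaleR_left)
    ultimately have "inner d g - inner d (mean_stat \<theta>) = 0"
      by (rule DERIV_local_min[OF _ \<delta>(1)])
    then show ?thesis
      by simp
  qed
  from this[of "g - mean_stat \<theta>"] have "inner (g - mean_stat \<theta>) (g - mean_stat \<theta>) = 0"
    by (simp only: inner_diff_right)
  then show ?thesis
    by simp
qed

text \<open>With \<open>\<theta>\<^sub>t = \<theta>' - t l\<close>, the three-point identity
  \<open>KL(P\<^sub>\<theta> \<parallel> P\<^sub>\<theta>\<^sub>') - KL(P\<^sub>\<theta>\<^sub>t \<parallel> P\<^sub>\<theta>\<^sub>') = KL(P\<^sub>\<theta> \<parallel> P\<^sub>\<theta>\<^sub>t) + t (l \<bullet> E\<^sub>\<theta>\<^sub>t[T] - l \<bullet> E\<^sub>\<theta>[T])\<close>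
  together with \<open>KL(P\<^sub>\<theta> \<parallel> P\<^sub>\<theta>\<^sub>t) \<ge> 0\<close>.\<close>

lemma inner_mean_stat_tilt_le:
  assumes "\<theta> \<in> \<Theta>" "\<theta>' \<in> \<Theta>" "\<theta>' - t *\<^sub>R l \<in> \<Theta>" "t > 0"
    and "KL (P \<theta>) (P \<theta>') \<le> KL (P (\<theta>' - t *\<^sub>R l)) (P \<theta>')"
  shows "inner l (mean_stat (\<theta>' - t *\<^sub>R l)) \<le> inner l (mean_stat \<theta>)"
proof -
  let ?\<theta>t = "\<theta>' - t *\<^sub>R l"
  have "inner (?\<theta>t - \<theta>) (mean_stat \<theta>) \<le> \<Psi> ?\<theta>t - \<Psi> \<theta>"
    using inner_mean_stat_le_Psi_diff[of \<theta> "?\<theta>t - \<theta>"] assms(1,3) by simp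
  then have "- t * inner l (mean_stat \<theta>) \<le> KL (P \<theta>) (P \<theta>') + \<Psi> ?\<theta>t - \<Psi> \<theta>'"
    by (simp add: KL_dist[OF assms(1,2)] inner_diff_left)
  also have "\<dots> \<le> - t * inner l (mean_stat ?\<theta>t)"
    using assms(5) by (simp add: KL_dist[OF assms(3,2)])
  finally show ?thesis
    using assms(4) by simp
qed

end

theorem propositionC3:
  fixes nu :: "'y::euclidean_space measure"
    and Y :: "'y set"
    and h :: "'y \<Rightarrow> real"
    and T :: "'y \<Rightarrow> 'p::euclidean_space"
    and X :: "'x::euclidean_space set"
    and xhat :: 'x
    and lam :: "'w::euclidean_space \<Rightarrow> 'x \<Rightarrow> 'p"
    and \<theta>hat :: 'p
    and w :: 'w
    and \<rho> \<gamma> :: real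
    and g :: 'p
  assumes Y: "space nu = Y"
    and h_meas: "h \<in> borel_measurable nu"
    and T_meas: "T \<in> borel_measurable nu"
    and h_nonneg: "\<And>y. y \<in> Y \<Longrightarrow> 0 \<le> h y"
    and regular: "regular_expfam nu h T"
    and xhat: "xhat \<in> X"
    and lam_cont: "continuous_on (UNIV \<times> X) (\<lambda>(w, x). lam w x)"
    and lam_Theta: "\<And>w x. x \<in> X \<Longrightarrow> lam w x \<in> expfam_Theta nu h T"
    and \<theta>hat: "\<theta>hat \<in> expfam_Theta nu h T"
    and \<rho>: "\<rho> > 0"
    and \<gamma>: "\<gamma> > 0"
    and \<theta>star_Theta: "\<theta>hat - (1 / \<gamma>) *\<^sub>R lam w xhat \<in> expfam_Theta nu h T"
    and grad: "GDERIV (expfam_Psi nu h T) (\<theta>hat - (1 / \<gamma>) *\<^sub>R lam w xhat) :> g"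
    and eq: "expfam_Psi nu h T (\<theta>hat - (1 / \<gamma>) *\<^sub>R lam w xhat)
               + (1 / \<gamma>) * inner g (lam w xhat)
             = expfam_Psi nu h T \<theta>hat - \<rho>"
  shows "expfam_dist nu h T (\<theta>hat - (1 / \<gamma>) *\<^sub>R lam w xhat) \<in> KL_ball nu h T \<theta>hat \<rho>
     \<and> (\<forall>Q \<in> KL_ball nu h T \<theta>hat \<rho>.
          (\<integral>y. loss_lambda nu h T lam xhat y w \<partial>Q)
            \<le> (\<integral>y. loss_lambda nu h T lam xhat y w
                   \<partial>expfam_dist nu h T (\<theta>hat - (1 / \<gamma>) *\<^sub>R lam w xhat)))"
proof -
  interpret exponential_family nu h T
    using h_meas T_meas h_nonneg regular Y by unfold_locales (auto simp: regular_expfam_def)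
  let ?l = "lam w xhat" and ?\<theta>s = "\<theta>hat - (1 / \<gamma>) *\<^sub>R lam w xhat"
  have loss: "loss_lambda nu h T lam xhat y w = \<Psi> ?l - inner (T y) ?l" for y
    by (simp add: loss_lambda_def)
  show ?thesis
  proof (cases "partition \<theta>hat = 0")
    case True
    note vanish = integral_dist_eq_0_if_partition_eq_0[OF \<theta>hat True]
    have "KL (P ?\<theta>s) (P \<theta>hat) = 0"
      by (simp add: KL_def KL_divergence_def vanish)
    then show ?thesis
      using \<theta>star_Theta \<rho> by (auto simp: KL_ball_def vanish)
  next
    case False
    interpret nondegenerate_exponential_family nu h T
      using partition_pos_if_partition_pos[OF \<theta>hat] partition_nonneg[of \<theta>hat] False
      by unfold_locales auto
    have on_boundary: "KL (P ?\<theta>s) (P \<theta>hat) = \<rho>"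
      using KL_dist[OF \<theta>star_Theta \<theta>hat] gradient_Psi_eq_mean_stat[OF \<theta>star_Theta grad] eq
      by (simp add: inner_commute)
    moreover have "(\<integral>y. \<Psi> ?l - inner (T y) ?l \<partial>P \<theta>) \<le> (\<integral>y. \<Psi> ?l - inner (T y) ?l \<partial>P ?\<theta>s)"
      if "\<theta> \<in> \<Theta>" "KL (P \<theta>) (P \<theta>hat) \<le> \<rho>" for \<theta>
      using that inner_mean_stat_tilt_le[OF that(1) \<theta>hat \<theta>star_Theta] \<gamma> on_boundary
      by (simp add: integral_dist_affine_stat \<theta>star_Theta)
    ultimately show ?thesis
      using \<theta>star_Theta \<rho> by (auto simp: KL_ball_def loss)
  qed
qed

end
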